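(* Let $d\in\{-1,-2,-3,-7,-11,-19,-43,-67,-163\}$ and let $R$ be the ring of algebraic integers of the imaginary quadratic number field $\mathbb{Q}[\sqrt d]$. If $A$ is a nonzero ideal of $R$, then there is a nonzero element $m\in R$ such that $P_A=\tau_m$. Moreover, there is a positive ordinary integer $n$ such that $P_{A\overline A}=\tau_n$, where $\overline A=\{\overline a: a\in A\}$ is the complex conjugate of $A$ and $A\overline A$ is the product ideal.
   Context: Here $P_H$ for a subset $H\subseteq R$ is the principal congruence on the multiplicative semigroup $R_{mult}$ of $R$: for $a\in R$, $H\dots a=\{(x,y)\in R\times R: xay\in H\}$ and $P_H=\{(a,b): H\dots a=H\dots b\}$. For $m\in R$, $\tau_m$ is the relation on $R$ given by $(a,b)\in\tau_m$ iff $\gcd(a,m)$ and $\gcd(b,m)$ are associates in $R$ (for these $d$, $R$ is a unique factorization domain, so gcds exist). *)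

theory Defs
  imports Complex_Main "HOL-Computational_Algebra.Polynomial"
begin

definition sqrt_d :: "int \<Rightarrow> complex" where
  "sqrt_d d = (if d \<ge> 0 then complex_of_real (sqrt (real_of_int d))
               else \<i> * complex_of_real (sqrt (real_of_int (- d))))"

definition quad_field :: "int \<Rightarrow> complex set" where
  "quad_field d = {of_rat a + of_rat b * sqrt_d d | a b. True}"

definition algebraic_integer :: "complex \<Rightarrow> bool" where
  "algebraic_integer z \<longleftrightarrow> (\<exists>p :: int poly. lead_coeff p = 1 \<and> poly (map_poly of_int p) z = 0)"

definition OK :: "int \<Rightarrow> complex set" where
  "OK d = {z \<in> quad_field d. algebraic_integer z}"

definition dvd_in :: "complex set \<Rightarrow> complex \<Rightarrow> complex \<Rightarrow> bool" where
  "dvd_in R a b \<longleftrightarrow> (\<exists>k\<in>R. b = a * k)"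

definition assoc_in :: "complex set \<Rightarrow> complex \<Rightarrow> complex \<Rightarrow> bool" where
  "assoc_in R a b \<longleftrightarrow> dvd_in R a b \<and> dvd_in R b a"

definition is_gcd_in :: "complex set \<Rightarrow> complex \<Rightarrow> complex \<Rightarrow> complex \<Rightarrow> bool" where
  "is_gcd_in R g a b \<longleftrightarrow> g \<in> R \<and> dvd_in R g a \<and> dvd_in R g b \<and>
     (\<forall>c\<in>R. dvd_in R c a \<and> dvd_in R c b \<longrightarrow> dvd_in R c g)"

definition tau :: "complex set \<Rightarrow> complex \<Rightarrow> (complex \<times> complex) set" where
  "tau R m = {(a, b). a \<in> R \<and> b \<in> R \<and>
     (\<exists>g h. is_gcd_in R g a m \<and> is_gcd_in R h b m \<and> assoc_in R g h)}"

text \<open>H..a and the principal congruence P_H of the multiplicative semigroup of R.\<close>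
definition ann_pairs :: "complex set \<Rightarrow> complex set \<Rightarrow> complex \<Rightarrow> (complex \<times> complex) set" where
  "ann_pairs R H a = {(x, y). x \<in> R \<and> y \<in> R \<and> x * a * y \<in> H}"

definition PH :: "complex set \<Rightarrow> complex set \<Rightarrow> (complex \<times> complex) set" where
  "PH R H = {(a, b). a \<in> R \<and> b \<in> R \<and> ann_pairs R H a = ann_pairs R H b}"

definition ideal_in :: "complex set \<Rightarrow> complex set \<Rightarrow> bool" where
  "ideal_in R I \<longleftrightarrow> I \<subseteq> R \<and> 0 \<in> I \<and> (\<forall>x\<in>I. \<forall>y\<in>I. x + y \<in> I) \<and>
     (\<forall>x\<in>I. - x \<in> I) \<and> (\<forall>r\<in>R. \<forall>x\<in>I. r * x \<in> I)"

definition ideal_prod :: "complex set \<Rightarrow> complex set \<Rightarrow> complex set \<Rightarrow> complex set" where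
  "ideal_prod R A B = \<Inter>{I. ideal_in R I \<and> {a * b | a b. a \<in> A \<and> b \<in> B} \<subseteq> I}"

end

theory Submission
  imports Defs "HOL-Computational_Algebra.Squarefree"
begin

text \<open>
  For the nine values of \<open>d\<close> the ring of integers is \<open>R = \<int> + \<int>w\<close> with \<open>w = \<surd>d\<close> or
  \<open>w = (1 + \<surd>d)/2\<close>, and \<open>R\<close> is a principal ideal domain: for these fields every divisor
  \<open>h \<ge> 2\<close> of a norm \<open>N(f + w)\<close> satisfies \<open>3h\<^sup>2 > |disc|\<close> (a finite check). This forces an
  ideal that contains a positive integer \<open>c\<close>, but is not contained in \<open>cR\<close>, to contain a nonzero
  element of norm \<open>< c\<^sup>2\<close>; applied to \<open>cnj \<beta> \<cdot> (\<alpha>R + \<beta>R)\<close> this shows, as in the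
  Dedekind--Hasse criterion, that an element \<open>\<beta>\<close> of least norm generates its ideal.

  In a principal ideal domain write \<open>a = g a'\<close> and \<open>m = g m'\<close> with \<open>g = gcd(a, m) = a s + m u\<close>.
  Then \<open>a' s + m' u = 1\<close> gives \<open>m \<mid> x a y \<longleftrightarrow> m' \<mid> x y\<close>, so \<open>a\<close> and \<open>b\<close> are related by
  \<open>P\<^bsub>mR\<^esub>\<close> iff their cofactors \<open>m'\<close> are associates, i.e. iff \<open>gcd(a, m)\<close> and \<open>gcd(b, m)\<close> are.
  Finally \<open>mR \<cdot> (cnj m)R = N(m)R\<close> with \<open>N(m)\<close> a positive integer.
\<close>

section \<open>Gauss's lemma for monic factors\<close>

lemma map_poly_hom_add:
  assumes "f 0 = 0" "\<And>x y. f (x + y) = f x + f y"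
  shows "map_poly f (p + q) = map_poly f p + map_poly f q"
  by (rule poly_eqI) (simp add: coeff_map_poly assms)

lemma map_poly_hom_mult:
  fixes f :: "'a::comm_semiring_1 \<Rightarrow> 'b::comm_semiring_1"
  assumes "f 0 = 0" "\<And>x y. f (x + y) = f x + f y" "\<And>x y. f (x * y) = f x * f y"
  shows "map_poly f (p * q) = map_poly f p * map_poly f q"
proof (rule poly_eqI)
  fix k
  have "f (\<Sum>i\<le>k. coeff p i * coeff q (k - i)) = (\<Sum>i\<le>k. f (coeff p i) * f (coeff q (k - i)))"
    using sum_comp_morphism[OF assms(1,2), of "\<lambda>i. coeff p i * coeff q (k - i)" "{..k}"]
    by (simp add: o_def assms(3))
  then show "coeff (map_poly f (p * q)) k = coeff (map_poly f p * map_poly f q) k"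
    by (simp add: coeff_map_poly coeff_mult assms(1))
qed

lemma rat_poly_common_denominator:
  fixes f :: "rat poly"
  obtains D :: int where "D > 0" "\<And>i. of_int D * coeff f i \<in> \<int>"
proof -
  define D where "D = (\<Prod>i\<le>degree f. snd (quotient_of (coeff f i)))"
  have "of_int D * coeff f i \<in> \<int>" for i
  proof (cases "i \<le> degree f")
    case True
    obtain a b where ab: "quotient_of (coeff f i) = (a, b)" by fastforce
    have "b dvd D"
      unfolding D_def using True ab by (metis atMost_iff dvd_prodI finite_atMost snd_conv)
    then obtain k where "D = b * k" ..
    with quotient_of_div[OF ab] quotient_of_denom_pos[OF ab] show ?thesis by simp
  next
    case False
    then show ?thesis by (simp add: coeff_eq_0)
  qed
  moreover have "D > 0" unfolding D_def by (simp add: prod_pos quotient_of_denom_pos')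
  ultimately show ?thesis using that by blast
qed

lemma monic_rat_poly_primitive_multiple:
  fixes f :: "rat poly"
  assumes monic: "lead_coeff f = 1"
  obtains A :: int and F :: "int poly"
    where "A > 0" "map_poly of_int F = smult (of_int A) f" "content F = 1"
proof -
  obtain D where D: "D > 0" "\<And>i. of_int D * coeff f i \<in> \<int>"
    using rat_poly_common_denominator[of f] by blast
  obtain F0 where F0: "smult (of_int D) f = map_poly of_int F0"
    using intpolyE[of "smult (of_int D) f"] D(2) by auto
  have "degree F0 = degree f"
    using arg_cong[OF F0, of degree] D(1) by (simp add: degree_map_poly)
  then have lc: "lead_coeff F0 = D"
    using arg_cong[OF F0, of "\<lambda>p. coeff p (degree f)"] monic by (simp add: coeff_map_poly)
  define c where "c = content F0"
  have "c dvd D" unfolding c_def using content_dvd_coeff[of F0 "degree F0"] lc by simp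
  then obtain A where A: "D = c * A" ..
  have "F0 \<noteq> 0" using lc D(1) by auto
  then have "c \<noteq> 0" by (simp add: c_def)
  moreover have "c \<ge> 0" unfolding c_def by (metis normalize_content abs_ge_zero normalize_int_def)
  ultimately have "c > 0" by simp
  with A D(1) have "A > 0" by (simp add: zero_less_mult_iff)
  define F where "F = primitive_part F0"
  have "smult (of_int c) (map_poly of_int F) = map_poly (of_int :: int \<Rightarrow> rat) (smult c F)"
    by (rule map_poly_smult[symmetric]) simp_all
  also have "smult c F = F0" by (simp add: F_def c_def)
  also have "map_poly of_int F0 = smult (of_int c) (smult (of_int A) f)"
    by (simp add: A F0[symmetric])
  finally have eq: "smult (of_int c) (map_poly of_int F) = smult (of_int c) (smult (of_int A) f)" .
  have "map_poly of_int F = smult (of_int A) f"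
    by (rule smult_cancel[OF _ eq]) (use \<open>c > 0\<close> in simp)
  moreover have "content F = 1" using \<open>F0 \<noteq> 0\<close> by (simp add: F_def)
  ultimately show ?thesis using that \<open>A > 0\<close> by blast
qed

lemma map_poly_of_int_inj:
  fixes p q :: "int poly"
  assumes "(map_poly of_int p :: 'a::ring_char_0 poly) = map_poly of_int q"
  shows "p = q"
  using assms by (simp add: poly_eq_iff coeff_map_poly)

lemma monic_factor_of_int_poly_integral:
  fixes p :: "int poly" and q h :: "rat poly"
  assumes pqh: "map_poly of_int p = q * h" and q: "lead_coeff q = 1" and h: "lead_coeff h = 1"
  shows "coeff q i \<in> \<int>"
proof -
  obtain A Q where A: "A > 0" "map_poly of_int Q = smult (of_int A) q" "content Q = 1"
    using monic_rat_poly_primitive_multiple[OF q] by blast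
  obtain B H where B: "B > 0" "map_poly of_int H = smult (of_int B) h" "content H = 1"
    using monic_rat_poly_primitive_multiple[OF h] by blast
  have "map_poly (of_int :: int \<Rightarrow> rat) (Q * H) = map_poly of_int (smult (A * B) p)"
    by (simp add: map_poly_hom_mult A B pqh map_poly_smult mult_ac)
  then have QH: "Q * H = smult (A * B) p"
    by (rule map_poly_of_int_inj)
  have "lead_coeff (map_poly (of_int :: int \<Rightarrow> rat) p) = 1"
    using pqh q h by (simp add: lead_coeff_mult)
  then have "lead_coeff p = 1" by (simp add: degree_map_poly coeff_map_poly)
  then have "content p = 1"
    using content_dvd_coeff[of p "degree p"] normalize_content[of p] by (simp add: is_unit_content_iff)
  then have "A * B = 1"
    using arg_cong[OF QH, of content] A(1) B(1) by (simp add: content_mult A B content_smult)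
  then have "A = 1" using A(1) B(1) by (simp add: pos_zmult_eq_1_iff)
  then show ?thesis using A(2) by (metis coeff_map_poly Ints_of_int of_int_0 of_int_1 smult_1_left)
qed

section \<open>Algebraic integers of imaginary quadratic fields\<close>

lemma sqrt_d_neg: "d < 0 \<Longrightarrow> sqrt_d d = \<i> * complex_of_real (sqrt (real_of_int (- d)))"
  by (simp add: sqrt_d_def)

lemma sqrt_d_mult_self: "d < 0 \<Longrightarrow> sqrt_d d * sqrt_d d = of_int d"
  by (simp add: sqrt_d_neg algebra_simps flip: of_real_mult)

lemma Re_sqrt_d: "d < 0 \<Longrightarrow> Re (sqrt_d d) = 0"
  by (simp add: sqrt_d_neg)

lemma Im_sqrt_d: "d < 0 \<Longrightarrow> Im (sqrt_d d) = sqrt (real_of_int (- d))"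
  by (simp add: sqrt_d_neg)

lemma cnj_sqrt_d: "d < 0 \<Longrightarrow> cnj (sqrt_d d) = - sqrt_d d"
  by (simp add: sqrt_d_neg)

lemma of_rat_complex_eq_of_real: "(of_rat x :: complex) = complex_of_real (of_rat x)"
  by (cases x) (simp add: of_rat_rat)

lemma quad_minpoly_dvd:
  fixes a b :: rat and P :: "rat poly"
  assumes d: "d < 0" and "b \<noteq> 0"
    and root: "poly (map_poly of_rat P) (of_rat a + of_rat b * sqrt_d d) = 0"
  shows "[:a^2 - of_int d * b^2, -2*a, 1:] dvd P"
proof -
  define z where "z = of_rat a + of_rat b * sqrt_d d"
  define q where "q = [:a^2 - of_int d * b^2, -2*a, 1:]"
  define ev where "ev = (\<lambda>f. poly (map_poly (of_rat :: rat \<Rightarrow> complex) f) z)"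
  define r where "r = P mod q"
  have "degree r < 2 \<or> r = 0" using degree_mod_less[of q P] by (auto simp: q_def r_def)
  then have r: "r = [:coeff r 0, coeff r 1:]"
    by (intro poly_eqI) (auto simp: coeff_pCons coeff_eq_0 split: nat.split)
  have "ev q = z * z - 2 * of_rat a * z + of_rat a ^ 2 - of_int d * of_rat b ^ 2"
    by (simp add: ev_def q_def map_poly_pCons of_rat_minus of_rat_diff of_rat_mult of_rat_power algebra_simps)
  also have "\<dots> = 0"
    by (simp add: z_def algebra_simps power2_eq_square sqrt_d_mult_self[OF d])
  finally have "ev q = 0" .
  moreover have "ev (P div q * q + r) = ev (P div q) * ev q + ev r"
    by (simp add: ev_def map_poly_hom_mult[of of_rat] map_poly_hom_add[of of_rat] of_rat_add of_rat_mult)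
  then have "ev P = ev (P div q) * ev q + ev r"
    by (simp add: r_def)
  ultimately have "ev r = 0" using root by (simp add: ev_def z_def)
  then have r0: "of_rat (coeff r 0) + of_rat (coeff r 1) * z = 0"
    unfolding ev_def by (subst (asm) r) (simp add: map_poly_pCons algebra_simps)
  have "Im (of_rat (coeff r 0) + of_rat (coeff r 1) * z) =
      of_rat (coeff r 1) * of_rat b * sqrt (real_of_int (- d))"
    by (simp add: z_def Re_sqrt_d[OF d] Im_sqrt_d[OF d] of_rat_complex_eq_of_real)
  with r0 have "of_rat (coeff r 1) * of_rat b * sqrt (real_of_int (- d)) = 0"
    by simp
  then have "coeff r 1 = 0" using \<open>b \<noteq> 0\<close> d by simp
  moreover from this r0 have "coeff r 0 = 0" by simp
  ultimately have "r = 0" by (subst r) simp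
  then show ?thesis by (simp add: r_def q_def mod_eq_0_iff_dvd)
qed

lemma rat_in_Ints_if_squarefree_times_square:
  fixes x :: rat
  assumes "squarefree d" "of_int d * x^2 \<in> \<int>"
  shows "x \<in> \<int>"
proof -
  obtain u v where uv: "quotient_of x = (u, v)" by fastforce
  have v: "v > 0" and cop: "coprime u v" and x: "x = of_int u / of_int v"
    using quotient_of_denom_pos[OF uv] quotient_of_coprime[OF uv] quotient_of_div[OF uv] by auto
  obtain k where "of_int d * x^2 = of_int k" using assms(2) by (auto elim: Ints_cases)
  then have "of_int (d * u^2) = (of_int (k * v^2) :: rat)"
    using v by (simp add: x field_simps)
  then have "v^2 dvd d * u^2" by (metis dvd_triv_right of_int_eq_iff)
  moreover have "coprime (v^2) (u^2)" using cop by (simp add: coprime_commute)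
  ultimately have "v^2 dvd d" by (simp add: coprime_dvd_mult_left_iff)
  then have "v = 1" using assms(1) v by (auto simp: squarefree_def)
  then show ?thesis by (simp add: x)
qed

lemma algebraic_integer_quad_trace_norm:
  assumes d: "d < 0" and alg: "algebraic_integer (of_rat a + of_rat b * sqrt_d d)"
  shows "2 * a \<in> \<int>" "a^2 - of_int d * b^2 \<in> \<int>"
proof -
  define z where "z = of_rat a + of_rat b * sqrt_d d"
  obtain p :: "int poly" where p: "lead_coeff p = 1" "poly (map_poly of_int p) z = 0"
    using alg by (auto simp: algebraic_integer_def z_def)
  have "2 * a \<in> \<int> \<and> a^2 - of_int d * b^2 \<in> \<int>"
  proof (cases "b = 0")
    case True
    have "z \<in> \<int>"
      using rational_algebraic_int_is_int[of z] p True by (auto simp: algebraic_int_altdef_ipoly z_def)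
    then obtain k where "of_rat a = (of_int k :: complex)" using True by (auto simp: z_def elim: Ints_cases)
    then have "a = of_int k" by (metis of_rat_eq_iff of_rat_of_int_eq)
    with True show ?thesis by simp
  next
    case False
    define q where "q = [:a^2 - of_int d * b^2, -2*a, 1:]"
    have "map_poly of_rat (map_poly of_int p) = (map_poly of_int p :: complex poly)"
      by (simp add: map_poly_map_poly o_def)
    then have "q dvd map_poly of_int p"
      unfolding q_def using quad_minpoly_dvd[OF d False] p(2) by (simp add: z_def)
    then obtain h where pqh: "map_poly of_int p = q * h" ..
    have "lead_coeff (map_poly (of_int :: int \<Rightarrow> rat) p) = 1"
      using p(1) by (simp add: degree_map_poly coeff_map_poly)
    moreover have lq: "lead_coeff q = 1" by (simp add: q_def)
    ultimately have lh: "lead_coeff h = 1" using pqh by (metis lead_coeff_mult mult_1)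
    show ?thesis
      using monic_factor_of_int_poly_integral[OF pqh lq lh, of 0]
        monic_factor_of_int_poly_integral[OF pqh lq lh, of 1]
      by (simp add: q_def)
  qed
  then show "2 * a \<in> \<int>" "a^2 - of_int d * b^2 \<in> \<int>" by blast+
qed

lemma OK_elem_half_integral:
  assumes d: "d < 0" and sqf: "squarefree d" and z: "z \<in> OK d"
  obtains S U :: int where "z = (of_int S + of_int U * sqrt_d d) / 2" "4 dvd S^2 - d * U^2"
proof -
  obtain a b where z_eq: "z = of_rat a + of_rat b * sqrt_d d"
    using z by (auto simp: OK_def quad_field_def)
  have alg: "algebraic_integer (of_rat a + of_rat b * sqrt_d d)"
    using z z_eq by (simp add: OK_def)
  obtain S where S: "2 * a = of_int S"
    using algebraic_integer_quad_trace_norm(1)[OF d alg] by (rule Ints_cases)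
  obtain T where T: "a^2 - of_int d * b^2 = of_int T"
    using algebraic_integer_quad_trace_norm(2)[OF d alg] by (rule Ints_cases)
  have "of_int d * (2 * b)^2 = (2 * a)^2 - 4 * (a^2 - of_int d * b^2)"
    by (simp add: power2_eq_square algebra_simps)
  also have "\<dots> = of_int (S^2 - 4 * T)"
    by (simp add: S T)
  finally have "of_int d * (2 * b)^2 \<in> \<int>" by simp
  then have "2 * b \<in> \<int>" by (rule rat_in_Ints_if_squarefree_times_square[OF sqf])
  then obtain U where U: "2 * b = of_int U" by (rule Ints_cases)
  show ?thesis
  proof
    have "2 * of_rat a = (of_int S :: complex)" "2 * of_rat b = (of_int U :: complex)"
      using arg_cong[OF S, of "of_rat :: rat \<Rightarrow> complex"] arg_cong[OF U, of "of_rat :: rat \<Rightarrow> complex"]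
      by (simp_all add: of_rat_mult)
    then show "z = (of_int S + of_int U * sqrt_d d) / 2" by (simp add: z_eq field_simps)
    have "of_int (S^2 - d * U^2) = (2 * a)^2 - of_int d * (2 * b)^2"
      by (simp add: S U)
    also have "\<dots> = 4 * (a^2 - of_int d * b^2)"
      by (simp add: power2_eq_square algebra_simps)
    finally have "of_int (S^2 - d * U^2) = (of_int (4 * T) :: rat)"
      by (simp add: T)
    then show "4 dvd S^2 - d * U^2" by (metis dvd_triv_left of_int_eq_iff)
  qed
qed

section \<open>Greatest common divisors in principal ideal domains\<close>

definition subring :: "complex set \<Rightarrow> bool" where
  "subring R \<longleftrightarrow> 0 \<in> R \<and> 1 \<in> R \<and> (\<forall>a\<in>R. \<forall>b\<in>R. a + b \<in> R \<and> a * b \<in> R \<and> - a \<in> R)"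

definition is_pid :: "complex set \<Rightarrow> bool" where
  "is_pid R \<longleftrightarrow> (\<forall>A. ideal_in R A \<longrightarrow> (\<exists>\<beta>\<in>R. A = (\<lambda>r. \<beta> * r) ` R))"

lemma subringD:
  assumes "subring R"
  shows subring_0: "0 \<in> R" and subring_1: "1 \<in> R"
    and subring_add: "a \<in> R \<Longrightarrow> b \<in> R \<Longrightarrow> a + b \<in> R"
    and subring_mult: "a \<in> R \<Longrightarrow> b \<in> R \<Longrightarrow> a * b \<in> R"
    and subring_uminus: "a \<in> R \<Longrightarrow> - a \<in> R"
  using assms by (auto simp: subring_def)

lemma ideal_in_subset: "ideal_in R I \<Longrightarrow> I \<subseteq> R"
  and ideal_in_zero: "ideal_in R I \<Longrightarrow> 0 \<in> I"
  and ideal_in_add: "ideal_in R I \<Longrightarrow> a \<in> I \<Longrightarrow> b \<in> I \<Longrightarrow> a + b \<in> I"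
  and ideal_in_uminus: "ideal_in R I \<Longrightarrow> a \<in> I \<Longrightarrow> - a \<in> I"
  and ideal_in_mult: "ideal_in R I \<Longrightarrow> r \<in> R \<Longrightarrow> a \<in> I \<Longrightarrow> r * a \<in> I"
  unfolding ideal_in_def by blast+

lemma ideal_in_diff: "ideal_in R I \<Longrightarrow> a \<in> I \<Longrightarrow> b \<in> I \<Longrightarrow> a - b \<in> I"
  using ideal_in_add[of R I a "- b"] ideal_in_uminus[of R I b] by simp

lemma ideal_in_image_mult:
  assumes R: "subring R" and I: "ideal_in R I" and c: "c \<in> R"
  shows "ideal_in R ((\<lambda>x. c * x) ` I)"
  unfolding ideal_in_def
proof (intro conjI ballI)
  show "(\<lambda>x. c * x) ` I \<subseteq> R"
    using ideal_in_subset[OF I] subring_mult[OF R c] by auto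
  show "0 \<in> (\<lambda>x. c * x) ` I"
    by (rule image_eqI[where x = 0]) (simp_all add: ideal_in_zero[OF I])
next
  fix x y assume "x \<in> (\<lambda>x. c * x) ` I" "y \<in> (\<lambda>x. c * x) ` I"
  then obtain i j where "i \<in> I" "j \<in> I" "x = c * i" "y = c * j" by blast
  then show "x + y \<in> (\<lambda>x. c * x) ` I"
    by (intro image_eqI[where x = "i + j"]) (simp_all add: distrib_left ideal_in_add[OF I])
next
  fix x assume "x \<in> (\<lambda>x. c * x) ` I"
  then obtain i where "i \<in> I" "x = c * i" by blast
  then show "- x \<in> (\<lambda>x. c * x) ` I"
    by (intro image_eqI[where x = "- i"]) (simp_all add: ideal_in_uminus[OF I])
next
  fix r x assume "r \<in> R" "x \<in> (\<lambda>x. c * x) ` I"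
  then obtain i where "i \<in> I" "x = c * i" by blast
  with \<open>r \<in> R\<close> show "r * x \<in> (\<lambda>x. c * x) ` I"
    by (intro image_eqI[where x = "r * i"]) (simp_all add: mult.left_commute ideal_in_mult[OF I])
qed

lemma ideal_in_self: "subring R \<Longrightarrow> ideal_in R R"
  unfolding ideal_in_def by (simp add: subringD)

lemma ideal_in_principal: "subring R \<Longrightarrow> c \<in> R \<Longrightarrow> ideal_in R ((\<lambda>r. c * r) ` R)"
  by (rule ideal_in_image_mult[OF _ ideal_in_self])

lemma ideal_in_generated_by_two:
  assumes R: "subring R" and a: "a \<in> R" and b: "b \<in> R"
  shows "ideal_in R {a * s + b * u | s u. s \<in> R \<and> u \<in> R}" (is "ideal_in R ?K")
  unfolding ideal_in_def
proof (intro conjI ballI)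
  show "?K \<subseteq> R"
    using a b by (auto intro!: subring_add[OF R] subring_mult[OF R])
  have "0 = a * 0 + b * 0" by simp
  then show "0 \<in> ?K" using subring_0[OF R] by blast
next
  fix x y assume "x \<in> ?K" "y \<in> ?K"
  then obtain s u s' u' where "x = a * s + b * u" "y = a * s' + b * u'"
    "s \<in> R" "u \<in> R" "s' \<in> R" "u' \<in> R" by blast
  moreover from this have "x + y = a * (s + s') + b * (u + u')" by (simp add: algebra_simps)
  ultimately show "x + y \<in> ?K" using subring_add[OF R] by blast
next
  fix x assume "x \<in> ?K"
  then obtain s u where "x = a * s + b * u" "s \<in> R" "u \<in> R" by blast
  moreover from this have "- x = a * (- s) + b * (- u)" by simp
  ultimately show "- x \<in> ?K" using subring_uminus[OF R] by blast
next
  fix r x assume "r \<in> R" "x \<in> ?K"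
  then obtain s u where "x = a * s + b * u" "s \<in> R" "u \<in> R" by blast
  moreover from this have "r * x = a * (r * s) + b * (r * u)" by (simp add: algebra_simps)
  ultimately show "r * x \<in> ?K" using subring_mult[OF R \<open>r \<in> R\<close>] by blast
qed

lemma dvd_in_refl: "subring R \<Longrightarrow> dvd_in R a a"
  unfolding dvd_in_def using subring_1 by force

lemma dvd_in_trans:
  assumes R: "subring R" and "dvd_in R a b" "dvd_in R b c"
  shows "dvd_in R a c"
proof -
  obtain k l where "k \<in> R" "l \<in> R" "b = a * k" "c = b * l"
    using assms(2,3) unfolding dvd_in_def by blast
  then show ?thesis
    unfolding dvd_in_def by (intro bexI[of _ "k * l"]) (simp_all add: mult.assoc subring_mult[OF R])
qed

lemma dvd_in_closed: "subring R \<Longrightarrow> a \<in> R \<Longrightarrow> dvd_in R a b \<Longrightarrow> b \<in> R"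
  unfolding dvd_in_def using subring_mult by blast

lemma assoc_in_trans: "subring R \<Longrightarrow> assoc_in R a b \<Longrightarrow> assoc_in R b c \<Longrightarrow> assoc_in R a c"
  unfolding assoc_in_def using dvd_in_trans by blast

lemma is_gcd_in_unique: "is_gcd_in R g a m \<Longrightarrow> is_gcd_in R g' a m \<Longrightarrow> assoc_in R g g'"
  unfolding is_gcd_in_def assoc_in_def by blast

lemma dvd_in_cofactor_iff:
  assumes eq: "g * g' = h * h'" and nz: "g * g' \<noteq> 0"
  shows "dvd_in R g h \<longleftrightarrow> dvd_in R h' g'"
proof -
  have "h = g * k \<longleftrightarrow> g' = h' * k" for k
  proof
    assume "h = g * k"
    then have "g * g' = g * (h' * k)" unfolding eq by (simp add: mult_ac)
    then show "g' = h' * k" using nz by simp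
  next
    assume "g' = h' * k"
    then have "h * h' = (g * k) * h'" unfolding eq[symmetric] by (simp add: mult_ac)
    then show "h = g * k" using nz unfolding eq by simp
  qed
  then show ?thesis unfolding dvd_in_def by blast
qed

lemma assoc_in_cofactor_iff:
  assumes "g * g' = h * h'" "g * g' \<noteq> 0"
  shows "assoc_in R g h \<longleftrightarrow> assoc_in R g' h'"
proof -
  have "h * h' = g * g'" "h * h' \<noteq> 0" using assms by simp_all
  with dvd_in_cofactor_iff[OF assms] dvd_in_cofactor_iff[OF this] show ?thesis
    unfolding assoc_in_def by blast
qed

lemma pid_bezout_gcd:
  assumes R: "subring R" "is_pid R" and a: "a \<in> R" and m: "m \<in> R"
  obtains g a' m' s u where "a = g * a'" "m = g * m'" "g = a * s + m * u"
    "a' \<in> R" "m' \<in> R" "s \<in> R" "u \<in> R" "is_gcd_in R g a m"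
proof -
  define K where "K = {a * s + m * u | s u. s \<in> R \<and> u \<in> R}"
  have "ideal_in R K" unfolding K_def by (rule ideal_in_generated_by_two[OF R(1) a m])
  then obtain g where g: "g \<in> R" "K = (\<lambda>r. g * r) ` R"
    using R(2) unfolding is_pid_def by blast
  have "a * 1 + m * 0 \<in> K" "a * 0 + m * 1 \<in> K"
    unfolding K_def using subring_0[OF R(1)] subring_1[OF R(1)] by blast+
  then obtain a' m' where a': "a' \<in> R" "a = g * a'" and m': "m' \<in> R" "m = g * m'"
    unfolding g(2) by auto
  have "g \<in> K" unfolding g(2)
    by (rule image_eqI[where x = 1]) (simp_all add: subring_1[OF R(1)])
  then obtain s u where su: "g = a * s + m * u" "s \<in> R" "u \<in> R"
    unfolding K_def by blast
  have "is_gcd_in R g a m"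
    unfolding is_gcd_in_def dvd_in_def
  proof (intro conjI ballI impI)
    fix c assume "c \<in> R" "(\<exists>k\<in>R. a = c * k) \<and> (\<exists>k\<in>R. m = c * k)"
    then obtain k l where "k \<in> R" "l \<in> R" "a = c * k" "m = c * l" by blast
    then have "g = c * (k * s + l * u)" "k * s + l * u \<in> R"
      using su by (simp_all add: algebra_simps subringD[OF R(1)])
    then show "\<exists>k\<in>R. g = c * k" by blast
  qed (use g(1) a' m' in auto)
  with a' m' su show ?thesis using that by blast
qed

lemma ann_pairs_principal:
  assumes R: "subring R" and "a' \<in> R" "m' \<in> R" "s \<in> R" "u \<in> R" "g \<noteq> 0"
    and bezout: "a' * s + m' * u = 1"
  shows "ann_pairs R ((\<lambda>r. (g * m') * r) ` R) (g * a') =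
    {(x, y). x \<in> R \<and> y \<in> R \<and> dvd_in R m' (x * y)}"
proof -
  have key: "(\<exists>r\<in>R. x * (g * a') * y = g * m' * r) \<longleftrightarrow> dvd_in R m' (x * y)"
    if xy: "x \<in> R" "y \<in> R" for x y
  proof
    assume "\<exists>r\<in>R. x * (g * a') * y = g * m' * r"
    then obtain r where r: "r \<in> R" "x * (g * a') * y = g * m' * r" by blast
    then have "g * (x * a' * y) = g * (m' * r)" by (simp add: mult_ac)
    then have xay: "x * a' * y = m' * r" using \<open>g \<noteq> 0\<close> by simp
    have "x * y = x * y * (a' * s + m' * u)" using bezout by simp
    also have "\<dots> = (x * a' * y) * s + m' * (x * y * u)" by (simp add: algebra_simps)
    also have "\<dots> = m' * r * s + m' * (x * y * u)" by (simp only: xay)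
    also have "\<dots> = m' * (r * s + x * y * u)" by (simp add: algebra_simps)
    finally have "x * y = m' * (r * s + x * y * u)" .
    moreover have "r * s + x * y * u \<in> R"
      using assms xy r(1) by (intro subring_add[OF R] subring_mult[OF R]) 
    ultimately show "dvd_in R m' (x * y)" unfolding dvd_in_def by blast
  next
    assume "dvd_in R m' (x * y)"
    then obtain k where k: "k \<in> R" "x * y = m' * k" unfolding dvd_in_def by blast
    then have "x * (g * a') * y = g * m' * (a' * k)" by (simp add: mult_ac)
    moreover have "a' * k \<in> R" using assms k(1) by (intro subring_mult[OF R])
    ultimately show "\<exists>r\<in>R. x * (g * a') * y = g * m' * r" by blast
  qed
  show ?thesis
    unfolding ann_pairs_def image_iff set_eq_iff split_paired_all mem_Collect_eq case_prod_conv
    using key by blast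
qed

lemma pid_ann_pairs_principal:
  assumes R: "subring R" "is_pid R" and m: "m \<in> R" "m \<noteq> 0" and a: "a \<in> R"
  obtains g m' where "is_gcd_in R g a m" "m' \<in> R" "m = g * m'"
    "ann_pairs R ((\<lambda>r. m * r) ` R) a = {(x, y). x \<in> R \<and> y \<in> R \<and> dvd_in R m' (x * y)}"
proof -
  obtain g a' m' s u where *: "a = g * a'" "m = g * m'" "g = a * s + m * u"
    "a' \<in> R" "m' \<in> R" "s \<in> R" "u \<in> R" "is_gcd_in R g a m"
    using pid_bezout_gcd[OF R a m(1)] .
  have "g \<noteq> 0" using *(2) m(2) by auto
  have "g * (a' * s + m' * u) = a * s + m * u" by (simp add: *(1,2) algebra_simps)
  also have "\<dots> = g * 1" using *(3) by simp
  finally have "a' * s + m' * u = 1" using \<open>g \<noteq> 0\<close> by simp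
  then have "ann_pairs R ((\<lambda>r. m * r) ` R) a = {(x, y). x \<in> R \<and> y \<in> R \<and> dvd_in R m' (x * y)}"
    unfolding *(1,2) by (rule ann_pairs_principal[OF R(1) *(4-7) \<open>g \<noteq> 0\<close>])
  with *(8,5,2) show ?thesis by (rule that)
qed

lemma divisor_pairs_eq_iff_assoc:
  assumes R: "subring R" and "m1 \<in> R" "m2 \<in> R"
  shows "{(x, y). x \<in> R \<and> y \<in> R \<and> dvd_in R m1 (x * y)} =
      {(x, y). x \<in> R \<and> y \<in> R \<and> dvd_in R m2 (x * y)} \<longleftrightarrow> assoc_in R m1 m2"
    (is "?D m1 = ?D m2 \<longleftrightarrow> _")
proof
  assume eq: "?D m1 = ?D m2"
  have "(1, m1) \<in> ?D m2" unfolding eq[symmetric]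
    using assms by (simp add: subring_1 dvd_in_refl)
  moreover have "(1, m2) \<in> ?D m1" unfolding eq
    using assms by (simp add: subring_1 dvd_in_refl)
  ultimately show "assoc_in R m1 m2" by (simp add: assoc_in_def)
next
  assume "assoc_in R m1 m2"
  then show "?D m1 = ?D m2"
    unfolding assoc_in_def using dvd_in_trans[OF R] by blast
qed

lemma tau_iff_assoc_gcd:
  assumes R: "subring R" and g: "is_gcd_in R g a m" and h: "is_gcd_in R h b m"
  shows "(a, b) \<in> tau R m \<longleftrightarrow> assoc_in R g h"
proof
  assume "(a, b) \<in> tau R m"
  then obtain g' h' where "is_gcd_in R g' a m" "is_gcd_in R h' b m" "assoc_in R g' h'"
    unfolding tau_def by blast
  then show "assoc_in R g h"
    using is_gcd_in_unique g h assoc_in_trans[OF R] by meson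
next
  assume "assoc_in R g h"
  moreover have "a \<in> R" "b \<in> R"
    using g h dvd_in_closed[OF R] unfolding is_gcd_in_def by blast+
  ultimately show "(a, b) \<in> tau R m"
    unfolding tau_def using g h by blast
qed

lemma PH_principal_eq_tau:
  assumes R: "subring R" "is_pid R" and m: "m \<in> R" "m \<noteq> 0"
  shows "PH R ((\<lambda>r. m * r) ` R) = tau R m"
proof (rule set_eqI)
  fix p :: "complex \<times> complex"
  obtain a b where p: "p = (a, b)" by fastforce
  show "p \<in> PH R ((\<lambda>r. m * r) ` R) \<longleftrightarrow> p \<in> tau R m"
  proof (cases "a \<in> R \<and> b \<in> R")
    case False
    then show ?thesis by (auto simp: p PH_def tau_def)
  next
    case True
    then have a: "a \<in> R" and b: "b \<in> R" by auto
    obtain ga ma where A: "is_gcd_in R ga a m" "ma \<in> R" "m = ga * ma"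
      "ann_pairs R ((\<lambda>r. m * r) ` R) a = {(x, y). x \<in> R \<and> y \<in> R \<and> dvd_in R ma (x * y)}"
      using pid_ann_pairs_principal[OF R m a] .
    obtain gb mb where B: "is_gcd_in R gb b m" "mb \<in> R" "m = gb * mb"
      "ann_pairs R ((\<lambda>r. m * r) ` R) b = {(x, y). x \<in> R \<and> y \<in> R \<and> dvd_in R mb (x * y)}"
      using pid_ann_pairs_principal[OF R m b] .
    have "(a, b) \<in> PH R ((\<lambda>r. m * r) ` R) \<longleftrightarrow> assoc_in R ma mb"
      using a b A(2,4) B(2,4) divisor_pairs_eq_iff_assoc[OF R(1)] by (simp add: PH_def)
    also have "\<dots> \<longleftrightarrow> assoc_in R ga gb"
      using A(3) B(3) m(2) by (intro assoc_in_cofactor_iff[symmetric]) simp_all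
    also have "\<dots> \<longleftrightarrow> (a, b) \<in> tau R m"
      using tau_iff_assoc_gcd[OF R(1) A(1) B(1)] by simp
    finally show ?thesis by (simp add: p)
  qed
qed

lemma ideal_prod_principal:
  assumes R: "subring R" and a: "a \<in> R" and b: "b \<in> R"
  shows "ideal_prod R ((\<lambda>r. a * r) ` R) ((\<lambda>r. b * r) ` R) = (\<lambda>r. (a * b) * r) ` R"
proof
  have "{x * y | x y. x \<in> (\<lambda>r. a * r) ` R \<and> y \<in> (\<lambda>r. b * r) ` R} \<subseteq> (\<lambda>r. (a * b) * r) ` R"
    using subring_mult[OF R] by (auto simp: mult_ac intro!: image_eqI)
  then show "ideal_prod R ((\<lambda>r. a * r) ` R) ((\<lambda>r. b * r) ` R) \<subseteq> (\<lambda>r. (a * b) * r) ` R"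
    unfolding ideal_prod_def using ideal_in_principal[OF R subring_mult[OF R a b]] by blast
next
  have "(a * b) * r \<in> I"
    if I: "ideal_in R I" "{x * y | x y. x \<in> (\<lambda>r. a * r) ` R \<and> y \<in> (\<lambda>r. b * r) ` R} \<subseteq> I"
      and r: "r \<in> R" for I r
  proof -
    have "(a * 1) * (b * 1) \<in> I" using I(2) subring_1[OF R] by blast
    then show ?thesis using ideal_in_mult[OF I(1) r, of "a * b"] by (simp add: mult.commute)
  qed
  then show "(\<lambda>r. (a * b) * r) ` R \<subseteq> ideal_prod R ((\<lambda>r. a * r) ` R) ((\<lambda>r. b * r) ` R)"
    unfolding ideal_prod_def by blast
qed

section \<open>Imaginary quadratic orders\<close>

definition int_lattice :: "complex \<Rightarrow> complex set" where
  "int_lattice w = {of_int x + of_int y * w | x y. True}"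

lemma int_lattice_iff: "z \<in> int_lattice w \<longleftrightarrow> (\<exists>x y. z = of_int x + of_int y * w)"
  by (simp add: int_lattice_def)

lemma int_subgroup_generator:
  fixes G :: "int set"
  assumes "c \<in> G" "c > 0"
    and add: "\<And>x y. x \<in> G \<Longrightarrow> y \<in> G \<Longrightarrow> x + y \<in> G"
    and mult: "\<And>k x. x \<in> G \<Longrightarrow> k * x \<in> G"
  obtains g where "g \<in> G" "g > 0" "\<And>y. y \<in> G \<Longrightarrow> g dvd y"
proof -
  obtain g where g: "g \<in> G" "g > 0" and least: "\<And>y. y \<in> G \<Longrightarrow> y > 0 \<Longrightarrow> nat g \<le> nat y"
    using ex_has_least_nat[of "\<lambda>y. y \<in> G \<and> y > 0" c nat] assms(1,2) by blast
  have "g dvd y" if "y \<in> G" for y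
  proof (rule ccontr)
    assume "\<not> g dvd y"
    moreover have "y mod g \<ge> 0" using g(2) by simp
    ultimately have pos: "y mod g > 0" by (simp add: dvd_eq_mod_eq_0)
    have "y + (- (y div g)) * g \<in> G" using add[OF that mult[OF g(1)]] .
    then have "y mod g \<in> G" by (simp add: minus_div_mult_eq_mod[symmetric] algebra_simps)
    then have "g \<le> y mod g" using least[of "y mod g"] pos by simp
    with pos_mod_bound[OF g(2), of y] show False by simp
  qed
  with g show ?thesis using that by blast
qed

locale imag_quadratic_order =
  fixes w :: complex and t n :: int
  assumes w_sq: "w * w = of_int t * w - of_int n"
    and cnj_w: "cnj w = of_int t - w"
    and disc_neg: "t^2 < 4 * n"
begin

abbreviation R :: "complex set" where "R \<equiv> int_lattice w"

lemma R_of_int [simp, intro]: "of_int k \<in> R"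
  unfolding int_lattice_iff by (rule exI[of _ k], rule exI[of _ 0]) simp

lemma R_0 [simp, intro]: "0 \<in> R" and R_1 [simp, intro]: "1 \<in> R"
  using R_of_int[of 0] R_of_int[of 1] by simp_all

lemma R_w [simp, intro]: "w \<in> R"
  unfolding int_lattice_iff by (rule exI[of _ 0], rule exI[of _ 1]) simp

lemma R_add [intro]:
  assumes "a \<in> R" "b \<in> R"
  shows "a + b \<in> R"
proof -
  obtain x y x' y' where "a = of_int x + of_int y * w" "b = of_int x' + of_int y' * w"
    using assms unfolding int_lattice_iff by blast
  then have "a + b = of_int (x + x') + of_int (y + y') * w" by (simp add: algebra_simps)
  then show ?thesis unfolding int_lattice_iff by blast
qed

lemma R_uminus [intro]:
  assumes "a \<in> R"
  shows "- a \<in> R"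
proof -
  obtain x y where "a = of_int x + of_int y * w" using assms unfolding int_lattice_iff by blast
  then have "- a = of_int (- x) + of_int (- y) * w" by simp
  then show ?thesis unfolding int_lattice_iff by blast
qed

lemma R_diff [intro]: "a \<in> R \<Longrightarrow> b \<in> R \<Longrightarrow> a - b \<in> R"
  using R_add[of a "- b"] R_uminus[of b] by simp

lemma R_mult [intro]:
  assumes "a \<in> R" "b \<in> R"
  shows "a * b \<in> R"
proof -
  obtain x y x' y' where ab: "a = of_int x + of_int y * w" "b = of_int x' + of_int y' * w"
    using assms unfolding int_lattice_iff by blast
  have "a * b = of_int (x * x' - n * y * y') + of_int (x * y' + y * x' + t * y * y') * w
      + of_int (y * y') * (w * w - (of_int t * w - of_int n))"
    by (simp add: ab algebra_simps)
  then have "a * b = of_int (x * x' - n * y * y') + of_int (x * y' + y * x' + t * y * y') * w"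
    by (simp add: w_sq)
  then show ?thesis unfolding int_lattice_iff by blast
qed

lemma R_cnj [intro]:
  assumes "a \<in> R"
  shows "cnj a \<in> R"
proof -
  obtain x y where "a = of_int x + of_int y * w" using assms unfolding int_lattice_iff by blast
  then have "cnj a = of_int (x + y * t) + of_int (- y) * w" by (simp add: cnj_w algebra_simps)
  then show ?thesis unfolding int_lattice_iff by blast
qed

lemma cnj_image_R: "cnj ` R = R"
  using R_cnj by (auto intro: image_eqI[of _ cnj "cnj _"])

lemma subring_R: "subring R"
  unfolding subring_def by auto

definition norm_form :: "int \<Rightarrow> int \<Rightarrow> int" where
  "norm_form x y = x^2 + t * x * y + n * y^2"

lemma four_norm_form: "4 * norm_form x y = (2 * x + t * y)^2 + (4 * n - t^2) * y^2"
  unfolding norm_form_def by (simp add: algebra_simps power2_eq_square)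

lemma norm_form_pos:
  assumes "(x, y) \<noteq> (0, 0)"
  shows "norm_form x y > 0"
proof (cases "y = 0")
  case True
  with assms show ?thesis by (simp add: norm_form_def)
next
  case False
  then have "(4 * n - t^2) * y^2 > 0" using disc_neg by simp
  then show ?thesis using four_norm_form[of x y] zero_le_power2[of "2 * x + t * y"] by linarith
qed

lemma norm_form_nonneg: "norm_form x y \<ge> 0"
  using norm_form_pos[of x y] by (cases "(x, y) = (0, 0)") (auto simp: norm_form_def)

lemma mult_cnj_coords:
  "(of_int x + of_int y * w) * cnj (of_int x + of_int y * w) = of_int (norm_form x y)"
proof -
  have "(of_int x + of_int y * w) * cnj (of_int x + of_int y * w) =
      of_int (x^2 + t * x * y) + of_int (y^2) * (of_int t * w - w * w)"
    by (simp add: cnj_w algebra_simps power2_eq_square)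
  also have "\<dots> = of_int (norm_form x y)" by (simp add: w_sq norm_form_def)
  finally show ?thesis .
qed

lemma cmod_sq_coords: "cmod (of_int x + of_int y * w) ^ 2 = of_int (norm_form x y)"
  using complex_norm_square[of "of_int x + of_int y * w"] mult_cnj_coords[of x y]
  by (metis of_real_eq_iff of_real_of_int_eq)

lemma cmod_sq_R:
  assumes "z \<in> R"
  shows "cmod z ^ 2 = real (nat \<lfloor>cmod z ^ 2\<rfloor>)"
proof -
  obtain x y where "z = of_int x + of_int y * w" using assms unfolding int_lattice_iff by blast
  then show ?thesis using cmod_sq_coords[of x y] norm_form_nonneg[of x y] by simp
qed

lemma R_norm_pos_int:
  assumes "\<beta> \<in> R" "\<beta> \<noteq> 0"
  obtains c :: int where "c \<ge> 1" "\<beta> * cnj \<beta> = of_int c" "cmod \<beta> ^ 2 = of_int c"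
proof -
  obtain x y where \<beta>: "\<beta> = of_int x + of_int y * w" using assms(1) unfolding int_lattice_iff by blast
  have "(x, y) \<noteq> (0, 0)" using assms(2) \<beta> by auto
  then have "norm_form x y \<ge> 1" using norm_form_pos[of x y] by simp
  moreover have "\<beta> * cnj \<beta> = of_int (norm_form x y)" unfolding \<beta> by (rule mult_cnj_coords)
  moreover have "cmod \<beta> ^ 2 = of_int (norm_form x y)" unfolding \<beta> by (rule cmod_sq_coords)
  ultimately show ?thesis using that by blast
qed

lemma R_algebraic_integer:
  assumes "z \<in> R"
  shows "algebraic_integer z"
proof -
  obtain x y where z: "z = of_int x + of_int y * w" using assms unfolding int_lattice_iff by blast
  have tr: "z + cnj z = of_int (2 * x + t * y)" by (simp add: z cnj_w algebra_simps)
  have nm: "z * cnj z = of_int (norm_form x y)" unfolding z by (rule mult_cnj_coords)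
  have "poly (map_poly of_int [:norm_form x y, - (2 * x + t * y), 1:]) z =
      of_int (norm_form x y) - of_int (2 * x + t * y) * z + z * z"
    by (simp add: map_poly_pCons algebra_simps)
  also have "\<dots> = z * cnj z - (z + cnj z) * z + z * z" by (simp only: tr nm)
  also have "\<dots> = 0" by (simp add: algebra_simps)
  finally show ?thesis
    unfolding algebraic_integer_def by (intro exI[of _ "[:norm_form x y, - (2 * x + t * y), 1:]"]) simp
qed

lemma R_subset_OK:
  assumes "w \<in> quad_field d"
  shows "R \<subseteq> OK d"
proof
  fix z assume z: "z \<in> R"
  obtain a b where w: "w = of_rat a + of_rat b * sqrt_d d" using assms unfolding quad_field_def by blast
  obtain x y where "z = of_int x + of_int y * w" using z unfolding int_lattice_iff by blast
  then have "z = of_rat (of_int x + of_int y * a) + of_rat (of_int y * b) * sqrt_d d"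
    by (simp add: w of_rat_add of_rat_mult algebra_simps)
  then have "z \<in> quad_field d" unfolding quad_field_def by blast
  with R_algebraic_integer[OF z] show "z \<in> OK d" by (simp add: OK_def)
qed

lemma norm_form_scale: "norm_form (k * x) (k * y) = k^2 * norm_form x y"
  unfolding norm_form_def by (simp add: algebra_simps power2_eq_square)

lemma ex_least_cmod:
  assumes "S \<subseteq> R" "a \<in> S"
  obtains \<beta> where "\<beta> \<in> S" "\<And>\<delta>. \<delta> \<in> S \<Longrightarrow> cmod \<beta> \<le> cmod \<delta>"
proof -
  obtain \<beta> where \<beta>: "\<beta> \<in> S" and least: "\<And>\<delta>. \<delta> \<in> S \<Longrightarrow> nat \<lfloor>cmod \<beta> ^ 2\<rfloor> \<le> nat \<lfloor>cmod \<delta> ^ 2\<rfloor>"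
    using ex_has_least_nat[of "\<lambda>z. z \<in> S" a "\<lambda>z. nat \<lfloor>cmod z ^ 2\<rfloor>"] assms(2) by blast
  have "cmod \<beta> ^ 2 \<le> cmod \<delta> ^ 2" if "\<delta> \<in> S" for \<delta>
    using least[OF that] cmod_sq_R \<beta> that assms(1) by (metis of_nat_le_iff subsetD)
  then show ?thesis using that \<beta> by (meson norm_ge_zero power2_le_imp_le)
qed

lemma ideal_lattice_basis:
  assumes I: "ideal_in R I" and c: "c > 0" "of_int c \<in> I"
  obtains g f where "g > 0" "of_int g * (of_int f + w) \<in> I"
    "\<And>x y. of_int x + of_int y * w \<in> I \<Longrightarrow> g dvd y"
proof -
  define G where "G = {y. \<exists>x. of_int x + of_int y * w \<in> I}"
  have "w * of_int c \<in> I" by (rule ideal_in_mult[OF I R_w c(2)])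
  then have cG: "c \<in> G" unfolding G_def by (intro CollectI exI[of _ 0]) (simp add: mult.commute)
  have Gadd: "y + y' \<in> G" if y: "y \<in> G" "y' \<in> G" for y y'
  proof -
    obtain x x' where "of_int x + of_int y * w \<in> I" "of_int x' + of_int y' * w \<in> I"
      using y unfolding G_def by blast
    from ideal_in_add[OF I this] show ?thesis
      unfolding G_def by (intro CollectI exI[of _ "x + x'"]) (simp add: algebra_simps)
  qed
  have Gmult: "k * y \<in> G" if y: "y \<in> G" for k y
  proof -
    obtain x where "of_int x + of_int y * w \<in> I" using y unfolding G_def by blast
    from ideal_in_mult[OF I R_of_int this, of k] show ?thesis
      unfolding G_def by (intro CollectI exI[of _ "k * x"]) (simp add: algebra_simps)
  qed
  obtain g where g: "g \<in> G" "g > 0" and gdvd: "\<And>y. y \<in> G \<Longrightarrow> g dvd y"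
    using int_subgroup_generator[OF cG c(1) Gadd Gmult] by blast
  obtain x0 where x0: "of_int x0 + of_int g * w \<in> I" using g(1) unfolding G_def by blast
  have "w * (of_int x0 + of_int g * w) = of_int x0 * w + of_int g * (w * w)"
    by (simp add: algebra_simps)
  also have "\<dots> = of_int (- g * n) + of_int (x0 + g * t) * w"
    by (simp add: w_sq algebra_simps)
  finally have "w * (of_int x0 + of_int g * w) = of_int (- g * n) + of_int (x0 + g * t) * w" .
  then have "of_int (- g * n) + of_int (x0 + g * t) * w \<in> I"
    using ideal_in_mult[OF I R_w x0] by simp
  then have "x0 + g * t \<in> G" unfolding G_def by blast
  then have "g dvd x0 + g * t" by (rule gdvd)
  then have "g dvd x0" by (simp add: dvd_add_left_iff)
  then obtain f where "x0 = g * f" ..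
  with x0 have "of_int g * (of_int f + w) \<in> I" by (simp add: algebra_simps)
  with g(2) gdvd show ?thesis unfolding G_def using that by blast
qed

lemma ideal_subset_multiples:
  assumes I: "ideal_in R I" and ints: "\<And>e. of_int e \<in> I \<Longrightarrow> c dvd e"
    and e: "of_int c * (of_int f + w) \<in> I"
    and cdvd: "\<And>x y. of_int x + of_int y * w \<in> I \<Longrightarrow> c dvd y"
  shows "I \<subseteq> (\<lambda>r. of_int c * r) ` R"
proof
  fix z assume "z \<in> I"
  then have "z \<in> R" using ideal_in_subset[OF I] by blast
  then obtain x y where z: "z = of_int x + of_int y * w" unfolding int_lattice_iff by blast
  obtain y1 where y1: "y = c * y1" using cdvd \<open>z \<in> I\<close> z by blast
  have "z - of_int y1 * (of_int c * (of_int f + w)) = of_int (x - y1 * c * f)"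
    by (simp add: z y1 algebra_simps)
  moreover have "z - of_int y1 * (of_int c * (of_int f + w)) \<in> I"
    using ideal_in_diff[OF I \<open>z \<in> I\<close> ideal_in_mult[OF I R_of_int e]] .
  ultimately have "c dvd x - y1 * c * f" using ints by metis
  from dvd_add[OF this dvd_triv_left[of c "y1 * f"]] have "c dvd x"
    by (simp add: algebra_simps)
  then obtain x1 where "x = c * x1" ..
  then have "z = of_int c * (of_int x1 + of_int y1 * w)" by (simp add: z y1 algebra_simps)
  then show "z \<in> (\<lambda>r. of_int c * r) ` R" unfolding int_lattice_iff by blast
qed

end

section \<open>A Dedekind--Hasse criterion\<close>

locale dedekind_hasse_order = imag_quadratic_order +
  assumes norm_value_divisors_large: "2 \<le> h \<Longrightarrow> h dvd f^2 + t * f + n \<Longrightarrow> 4 * n - t^2 < 3 * h^2"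
begin

lemma norm_form_small_representative:
  assumes h: "2 \<le> h" and dvd: "h dvd norm_form f 1"
  obtains j where "norm_form (f - h * j) 1 < h^2"
proof -
  define j where "j = (2 * f + t + h) div (2 * h)"
  define f' where "f' = f - h * j"
  have "(2 * f + t + h) div (2 * h) * (2 * h) + (2 * f + t + h) mod (2 * h) = 2 * f + t + h"
    by (rule div_mult_mod_eq)
  then have "2 * f' + t = (2 * f + t + h) mod (2 * h) - h"
    unfolding f'_def j_def by (simp add: algebra_simps)
  moreover have "0 \<le> (2 * f + t + h) mod (2 * h)" "(2 * f + t + h) mod (2 * h) < 2 * h"
    using h by simp_all
  ultimately have "\<bar>2 * f' + t\<bar> \<le> \<bar>h\<bar>" by linarith
  then have sq: "(2 * f' + t)^2 \<le> h^2" by (simp only: abs_le_square_iff)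
  have "norm_form f' 1 = norm_form f 1 + h * (h * j^2 - 2 * f * j - t * j)"
    unfolding norm_form_def f'_def by (simp add: algebra_simps power2_eq_square)
  with dvd have "h dvd norm_form f' 1" by simp
  then have "h dvd f'^2 + t * f' + n" by (simp add: norm_form_def)
  then have "4 * n - t^2 < 3 * h^2" using norm_value_divisors_large h by blast
  with sq four_norm_form[of f' 1] have "norm_form f' 1 < h^2" by simp
  then show ?thesis using that f'_def by blast
qed

lemma small_element_of_ideal_int_multiples:
  assumes I: "ideal_in R I" and c: "c \<ge> 1" "of_int c \<in> I"
    and ints: "\<And>e. of_int e \<in> I \<Longrightarrow> c dvd e"
    and not_sub: "\<not> I \<subseteq> (\<lambda>r. of_int c * r) ` R"
  obtains \<gamma> where "\<gamma> \<in> I" "\<gamma> \<noteq> 0" "cmod \<gamma> ^ 2 < of_int (c^2)"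
proof -
  obtain g f where g: "g > 0" and e: "of_int g * (of_int f + w) \<in> I"
    and gdvd: "\<And>x y. of_int x + of_int y * w \<in> I \<Longrightarrow> g dvd y"
    using ideal_lattice_basis[OF I _ c(2)] c(1) by auto
  have "of_int 0 + of_int c * w \<in> I" using ideal_in_mult[OF I R_w c(2)] by (simp add: mult.commute)
  then have "g dvd c" by (rule gdvd)
  then obtain h where h: "c = g * h" ..
  have "cnj (of_int f + w) * (of_int g * (of_int f + w)) \<in> I"
    by (intro ideal_in_mult[OF I _ e] R_cnj R_add R_of_int R_w)
  also have "cnj (of_int f + w) * (of_int g * (of_int f + w)) =
      of_int g * ((of_int f + of_int 1 * w) * cnj (of_int f + of_int 1 * w))"
    by (simp add: mult_ac)
  also have "\<dots> = of_int (g * norm_form f 1)" unfolding mult_cnj_coords by simp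
  finally have "of_int (g * norm_form f 1) \<in> I" .
  then have "g * h dvd g * norm_form f 1" using ints h by blast
  then have hdvd: "h dvd norm_form f 1" using g by simp
  have "h \<noteq> 1"
  proof
    assume "h = 1"
    with h e gdvd have "I \<subseteq> (\<lambda>r. of_int c * r) ` R"
      by (intro ideal_subset_multiples[OF I ints]) auto
    with not_sub show False ..
  qed
  moreover have "0 < g * h" using h c(1) by simp
  then have "h > 0" using g by (simp add: zero_less_mult_iff)
  ultimately have "h \<ge> 2" by simp
  then obtain j where j: "norm_form (f - h * j) 1 < h^2"
    using norm_form_small_representative[OF _ hdvd] by blast
  define \<gamma> where "\<gamma> = of_int g * (of_int f + w) - of_int j * of_int c"
  have "\<gamma> \<in> I" unfolding \<gamma>_def by (intro ideal_in_diff[OF I e] ideal_in_mult[OF I R_of_int c(2)])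
  have \<gamma>: "\<gamma> = of_int (g * (f - h * j)) + of_int g * w"
    by (simp add: \<gamma>_def h algebra_simps)
  have cmod_\<gamma>: "cmod \<gamma> ^ 2 = of_int (g^2 * norm_form (f - h * j) 1)"
    using cmod_sq_coords[of "g * (f - h * j)" g] norm_form_scale[of g "f - h * j" 1] by (simp add: \<gamma>)
  have "norm_form (f - h * j) 1 > 0" by (rule norm_form_pos) simp
  then have "\<gamma> \<noteq> 0" using cmod_\<gamma> g by auto
  moreover have "cmod \<gamma> ^ 2 < of_int (c^2)" using cmod_\<gamma> j g by (simp add: h power_mult_distrib)
  ultimately show ?thesis using that \<open>\<gamma> \<in> I\<close> by blast
qed

lemma small_element_of_ideal:
  assumes I: "ideal_in R I" and c: "c \<ge> 1" "of_int c \<in> I"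
    and not_sub: "\<not> I \<subseteq> (\<lambda>r. of_int c * r) ` R"
  obtains \<gamma> where "\<gamma> \<in> I" "\<gamma> \<noteq> 0" "cmod \<gamma> ^ 2 < of_int (c^2)"
proof (cases "\<forall>e. of_int e \<in> I \<longrightarrow> c dvd e")
  case True
  then show ?thesis using small_element_of_ideal_int_multiples[OF I c _ not_sub] that by blast
next
  case False
  then obtain e where e: "of_int e \<in> I" "\<not> c dvd e" by blast
  have "of_int (e mod c) = of_int e - of_int (e div c) * (of_int c :: complex)"
    by (simp add: minus_div_mult_eq_mod[symmetric])
  then have "of_int (e mod c) \<in> I"
    using ideal_in_diff[OF I e(1) ideal_in_mult[OF I R_of_int c(2)]] by simp
  moreover have "e mod c \<noteq> 0" using e(2) by (simp add: dvd_eq_mod_eq_0)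
  moreover have "0 \<le> e mod c" "e mod c < c" using c(1) by simp_all
  then have "(e mod c)^2 < c^2" by (simp add: power_strict_mono)
  ultimately show ?thesis using that[of "of_int (e mod c)"] by (simp flip: of_int_power)
qed

lemma dedekind_hasse:
  assumes \<alpha>: "\<alpha> \<in> R" and \<beta>: "\<beta> \<in> R" "\<beta> \<noteq> 0" and not_mult: "\<alpha> \<notin> (\<lambda>r. \<beta> * r) ` R"
  obtains s u where "s \<in> R" "u \<in> R" "s * \<alpha> + u * \<beta> \<noteq> 0" "cmod (s * \<alpha> + u * \<beta>) < cmod \<beta>"
proof -
  define K where "K = {\<alpha> * s + \<beta> * u | s u. s \<in> R \<and> u \<in> R}"
  define J where "J = (\<lambda>z. cnj \<beta> * z) ` K"
  have J: "ideal_in R J" unfolding J_def K_def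
    by (intro ideal_in_image_mult[OF subring_R] ideal_in_generated_by_two[OF subring_R \<alpha> \<beta>(1)]) (use \<beta> in auto)
  obtain c where c: "c \<ge> 1" "\<beta> * cnj \<beta> = of_int c" "cmod \<beta> ^ 2 = of_int c"
    using R_norm_pos_int[OF \<beta>] .
  have "\<beta> \<in> K" unfolding K_def by (intro CollectI exI[of _ 0] exI[of _ 1]) simp
  then have "of_int c \<in> J" unfolding J_def c(2)[symmetric] by (auto simp: mult.commute)
  have "\<alpha> \<in> K" unfolding K_def by (intro CollectI exI[of _ 1] exI[of _ 0]) simp
  then have "cnj \<beta> * \<alpha> \<in> J" unfolding J_def by blast
  moreover have "cnj \<beta> * \<alpha> \<notin> (\<lambda>r. of_int c * r) ` R"
  proof
    assume "cnj \<beta> * \<alpha> \<in> (\<lambda>r. of_int c * r) ` R"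
    then obtain r where "r \<in> R" "cnj \<beta> * \<alpha> = cnj \<beta> * (\<beta> * r)" by (auto simp flip: c(2) simp: mult_ac)
    with \<beta>(2) not_mult show False by auto
  qed
  ultimately obtain \<gamma> where \<gamma>: "\<gamma> \<in> J" "\<gamma> \<noteq> 0" "cmod \<gamma> ^ 2 < of_int (c^2)"
    using small_element_of_ideal[OF J c(1) \<open>of_int c \<in> J\<close>] by blast
  then obtain s u where su: "s \<in> R" "u \<in> R" "\<gamma> = cnj \<beta> * (\<alpha> * s + \<beta> * u)"
    unfolding J_def K_def by blast
  have "cmod \<beta> ^ 2 * cmod (s * \<alpha> + u * \<beta>) ^ 2 = cmod \<gamma> ^ 2"
    by (simp add: su norm_mult power_mult_distrib mult_ac)
  also have "\<dots> < of_int (c^2)" by (rule \<gamma>(3))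
  also have "\<dots> = cmod \<beta> ^ 2 * cmod \<beta> ^ 2" by (metis c(3) of_int_power power2_eq_square)
  finally have "cmod \<beta> ^ 2 * cmod (s * \<alpha> + u * \<beta>) ^ 2 < cmod \<beta> ^ 2 * cmod \<beta> ^ 2" .
  then have "cmod (s * \<alpha> + u * \<beta>) ^ 2 < cmod \<beta> ^ 2"
    using \<beta>(2) by (metis mult_less_cancel_left_pos zero_less_norm_iff zero_less_power)
  then have "cmod (s * \<alpha> + u * \<beta>) < cmod \<beta>"
    by (rule power_less_imp_less_base) simp
  moreover have "s * \<alpha> + u * \<beta> \<noteq> 0" using \<gamma>(2) su(3) by (simp add: mult_ac)
  ultimately show ?thesis using that su(1,2) by blast
qed

theorem is_pid_R: "is_pid R"
  unfolding is_pid_def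
proof (intro allI impI)
  fix A assume A: "ideal_in R A"
  show "\<exists>\<beta>\<in>R. A = (\<lambda>r. \<beta> * r) ` R"
  proof (cases "A \<subseteq> {0}")
    case True
    then have "A = (\<lambda>r. 0 * r) ` R" using ideal_in_zero[OF A] by auto
    then show ?thesis by blast
  next
    case False
    then obtain a where "a \<in> A - {0}" by blast
    then obtain \<beta> where \<beta>: "\<beta> \<in> A - {0}" and least: "\<And>\<delta>. \<delta> \<in> A - {0} \<Longrightarrow> cmod \<beta> \<le> cmod \<delta>"
      using ex_least_cmod[of "A - {0}"] ideal_in_subset[OF A] by blast
    have \<beta>R: "\<beta> \<in> R" using \<beta> ideal_in_subset[OF A] by blast
    have "A \<subseteq> (\<lambda>r. \<beta> * r) ` R"
    proof
      fix \<alpha> assume \<alpha>: "\<alpha> \<in> A"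
      show "\<alpha> \<in> (\<lambda>r. \<beta> * r) ` R"
      proof (rule ccontr)
        assume "\<alpha> \<notin> (\<lambda>r. \<beta> * r) ` R"
        then obtain s u where su: "s \<in> R" "u \<in> R" "s * \<alpha> + u * \<beta> \<noteq> 0"
          "cmod (s * \<alpha> + u * \<beta>) < cmod \<beta>"
          using dedekind_hasse \<alpha> \<beta> \<beta>R ideal_in_subset[OF A] by blast
        have "s * \<alpha> + u * \<beta> \<in> A"
          using \<alpha> \<beta> su(1,2) by (intro ideal_in_add[OF A] ideal_in_mult[OF A]) auto
        with su(3,4) least show False by fastforce
      qed
    qed
    moreover have "(\<lambda>r. \<beta> * r) ` R \<subseteq> A"
      using ideal_in_mult[OF A] \<beta> by (auto simp: mult.commute)
    ultimately show ?thesis using \<beta>R by blast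
  qed
qed

theorem PH_eq_tau:
  assumes A: "ideal_in R A" "A \<noteq> {0}"
  shows "(\<exists>m\<in>R. m \<noteq> 0 \<and> PH R A = tau R m) \<and>
    (\<exists>k::int. k > 0 \<and> PH R (ideal_prod R A (cnj ` A)) = tau R (of_int k))"
proof -
  obtain \<beta> where \<beta>: "\<beta> \<in> R" "A = (\<lambda>r. \<beta> * r) ` R"
    using is_pid_R A(1) unfolding is_pid_def by blast
  have "\<beta> \<noteq> 0" using \<beta>(2) A(2) by auto
  then obtain k where k: "k \<ge> 1" "\<beta> * cnj \<beta> = of_int k" using R_norm_pos_int[OF \<beta>(1)] by blast
  have "cnj ` A = (\<lambda>r. cnj \<beta> * r) ` R"
    unfolding \<beta>(2) image_image by (subst cnj_image_R[symmetric]) (simp add: image_image)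
  then have "ideal_prod R A (cnj ` A) = (\<lambda>r. of_int k * r) ` R"
    using ideal_prod_principal[OF subring_R \<beta>(1) R_cnj[OF \<beta>(1)]] \<beta>(2) k(2) by simp
  then have "PH R (ideal_prod R A (cnj ` A)) = tau R (of_int k)"
    using PH_principal_eq_tau[OF subring_R is_pid_R, of "of_int k"] k(1) by simp
  moreover have "PH R A = tau R \<beta>"
    unfolding \<beta>(2) by (rule PH_principal_eq_tau[OF subring_R is_pid_R \<beta>(1) \<open>\<beta> \<noteq> 0\<close>])
  moreover have "k > 0" using k(1) by simp
  ultimately show ?thesis using \<beta>(1) \<open>\<beta> \<noteq> 0\<close> by blast
qed

end

section \<open>The nine fields of class number one\<close>

lemma int_square_mod_4: "(x::int)^2 mod 4 = (if even x then 0 else 1)"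
proof (cases "even x")
  case True
  then obtain c where "x = 2 * c" by blast
  then show ?thesis by (simp add: power2_eq_square)
next
  case False
  then obtain c where c: "x = 2 * c + 1" using oddE by blast
  have "x^2 = 1 + (c^2 + c) * 4" by (simp add: c algebra_simps power2_eq_square)
  then have "x^2 mod 4 = 1 mod 4" by (simp only: mod_mult_self1)
  then show ?thesis using False by simp
qed

lemma four_dvd_norm_imp_even:
  fixes S U d :: int
  assumes "4 dvd S^2 - d * U^2" "d mod 4 \<in> {2, 3}"
  shows "even S \<and> even U"
proof -
  have "(d mod 4) * (U^2 mod 4) mod 4 = d * U^2 mod 4" by (rule mod_mult_eq)
  then have "(S^2 mod 4 - (d mod 4) * (U^2 mod 4)) mod 4 = (S^2 - d * U^2) mod 4"
    by (metis mod_diff_eq mod_mod_trivial)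
  then have "(S^2 mod 4 - (d mod 4) * (U^2 mod 4)) mod 4 = 0"
    using assms(1) by simp
  then show ?thesis using assms(2) unfolding int_square_mod_4 by (auto split: if_splits)
qed

lemma imag_quadratic_order_sqrt_d:
  assumes "d < 0"
  shows "imag_quadratic_order (sqrt_d d) 0 (- d)"
  by unfold_locales (use assms in \<open>simp_all add: sqrt_d_mult_self cnj_sqrt_d\<close>)

lemma imag_quadratic_order_half:
  assumes d: "d < 0" "d mod 4 = 1"
  shows "imag_quadratic_order ((1 + sqrt_d d) / 2) 1 ((1 - d) div 4)"
proof unfold_locales
  have "4 dvd 1 - d" using d(2) mod_eq_dvd_iff[of 1 4 d] by simp
  then have k: "of_int ((1 - d) div 4) = (1 - of_int d) / (4 :: complex)" by (simp add: of_int_div)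
  show "(1 + sqrt_d d) / 2 * ((1 + sqrt_d d) / 2) = of_int 1 * ((1 + sqrt_d d) / 2) - of_int ((1 - d) div 4)"
    unfolding k by (simp add: field_simps sqrt_d_mult_self[OF d(1)])
  show "cnj ((1 + sqrt_d d) / 2) = of_int 1 - (1 + sqrt_d d) / 2"
    by (simp add: cnj_sqrt_d[OF d(1)] field_simps)
  show "1^2 < 4 * ((1 - d) div 4)"
    using d(1) \<open>4 dvd 1 - d\<close> by simp
qed

lemma OK_eq_int_lattice_sqrt_d:
  assumes d: "d < 0" "squarefree d" "d mod 4 \<in> {2, 3}"
  shows "OK d = int_lattice (sqrt_d d)"
proof
  interpret imag_quadratic_order "sqrt_d d" 0 "- d" by (rule imag_quadratic_order_sqrt_d[OF d(1)])
  have "sqrt_d d \<in> quad_field d" unfolding quad_field_def by (intro CollectI exI[of _ 0] exI[of _ 1]) simp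
  then show "int_lattice (sqrt_d d) \<subseteq> OK d" by (rule R_subset_OK)
  show "OK d \<subseteq> int_lattice (sqrt_d d)"
  proof
    fix z assume "z \<in> OK d"
    then obtain S U where SU: "z = (of_int S + of_int U * sqrt_d d) / 2" "4 dvd S^2 - d * U^2"
      by (rule OK_elem_half_integral[OF d(1,2)])
    then obtain x y where "S = 2 * x" "U = 2 * y" using four_dvd_norm_imp_even d(3) by blast
    then have "z = of_int x + of_int y * sqrt_d d" by (simp add: SU(1))
    then show "z \<in> int_lattice (sqrt_d d)" unfolding int_lattice_iff by blast
  qed
qed

lemma OK_eq_int_lattice_half:
  assumes d: "d < 0" "squarefree d" "d mod 4 = 1"
  shows "OK d = int_lattice ((1 + sqrt_d d) / 2)"
proof
  interpret imag_quadratic_order "(1 + sqrt_d d) / 2" 1 "(1 - d) div 4"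
    by (rule imag_quadratic_order_half[OF d(1,3)])
  have "(1 + sqrt_d d) / 2 \<in> quad_field d"
    unfolding quad_field_def by (intro CollectI exI[of _ "1/2"] exI[of _ "1/2"]) (simp add: of_rat_divide field_simps)
  then show "int_lattice ((1 + sqrt_d d) / 2) \<subseteq> OK d" by (rule R_subset_OK)
  show "OK d \<subseteq> int_lattice ((1 + sqrt_d d) / 2)"
  proof
    fix z assume "z \<in> OK d"
    then obtain S U where SU: "z = (of_int S + of_int U * sqrt_d d) / 2" "4 dvd S^2 - d * U^2"
      by (rule OK_elem_half_integral[OF d(1,2)])
    have "4 dvd d - 1" using d(3) mod_eq_dvd_iff[of d 4 1] by simp
    then obtain k where "d = 4 * k + 1" by (metis dvd_def eq_diff_eq)
    then have eq: "S^2 - U^2 = (S^2 - d * U^2) + 4 * (k * U^2)" by (simp add: algebra_simps)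
    have "4 dvd S^2 - U^2" unfolding eq by (rule dvd_add[OF SU(2)]) simp
    then have "S^2 mod 4 = U^2 mod 4" by (simp add: mod_eq_dvd_iff)
    then have "even (S - U)" unfolding int_square_mod_4 by (auto split: if_splits)
    then obtain x where "S - U = 2 * x" by blast
    then have "z = of_int x + of_int U * ((1 + sqrt_d d) / 2)" by (simp add: SU(1) field_simps)
    then show "z \<in> int_lattice ((1 + sqrt_d d) / 2)" unfolding int_lattice_iff by blast
  qed
qed

lemma Icc_int_eq_insert_lb: "a \<le> b \<Longrightarrow> {a..b::int} = insert a {a + 1..b}"
  by auto

lemma squarefree_int_if_no_small_square_divisor:
  fixes d M :: int
  assumes "d \<noteq> 0" "0 \<le> M" "\<bar>d\<bar> < (M + 1)^2" "\<forall>v\<in>{2..M}. \<not> v^2 dvd d"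
  shows "squarefree d"
  unfolding squarefree_def
proof (intro allI impI)
  fix x :: int assume dvd: "x^2 dvd d"
  then have "\<bar>x\<bar>^2 \<le> \<bar>d\<bar>" using dvd_imp_le_int[OF assms(1) dvd] by simp
  then have "\<bar>x\<bar>^2 < (M + 1)^2" using assms(3) by linarith
  then have "\<bar>x\<bar> \<le> M" using assms(2) power_less_imp_less_base[of "\<bar>x\<bar>" 2 "M + 1"] by linarith
  moreover have "x \<noteq> 0" using dvd assms(1) by auto
  moreover have "\<bar>x\<bar> \<notin> {2..M}"
  proof
    assume "\<bar>x\<bar> \<in> {2..M}"
    with assms(4) have "\<not> \<bar>x\<bar>^2 dvd d" by blast
    with dvd show False by simp
  qed
  ultimately have "\<bar>x\<bar> = 1" by auto
  then show "x dvd 1" by (simp add: abs_eq_iff)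
qed

lemma dedekind_hasse_order_sqrt_d:
  assumes "- 2 \<le> d" "d < 0"
  shows "dedekind_hasse_order (sqrt_d d) 0 (- d)"
proof (rule dedekind_hasse_order.intro[OF imag_quadratic_order_sqrt_d[OF assms(2)]], unfold_locales)
  fix h f :: int assume "2 \<le> h"
  then have "2^2 \<le> h^2" by (intro power_mono) simp_all
  then show "4 * - d - 0^2 < 3 * h^2" using assms by simp
qed

lemma dedekind_hasse_order_half:
  assumes d: "d < 0" "d mod 4 = 1" and bound: "0 \<le> M" "- d < 3 * (M + 1)^2"
    and check: "\<forall>h\<in>{2..M}. 3 * h^2 \<le> - d \<longrightarrow> (\<forall>r\<in>{0..h - 1}. \<not> h dvd r^2 + r + (1 - d) div 4)"
  shows "dedekind_hasse_order ((1 + sqrt_d d) / 2) 1 ((1 - d) div 4)"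
proof (rule dedekind_hasse_order.intro[OF imag_quadratic_order_half[OF d]], unfold_locales)
  fix h f :: int
  assume h: "2 \<le> h" and dvd: "h dvd f^2 + 1 * f + (1 - d) div 4"
  have four_k: "4 * ((1 - d) div 4) = 1 - d" using d(2) mod_eq_dvd_iff[of 1 4 d] by simp
  show "4 * ((1 - d) div 4) - 1^2 < 3 * h^2"
  proof (rule ccontr)
    assume "\<not> ?thesis"
    then have small: "3 * h^2 \<le> - d" using four_k by simp
    then have "h^2 < (M + 1)^2" using bound(2) by linarith
    then have "h \<le> M" using bound(1) power_less_imp_less_base[of h 2 "M + 1"] by linarith
    define q where "q = f div h"
    define r where "r = f mod h"
    have f: "f = h * q + r" unfolding q_def r_def by simp
    have "f^2 + 1 * f + (1 - d) div 4 = (r^2 + r + (1 - d) div 4) + h * (2 * q * r + h * q^2 + q)"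
      unfolding f by (simp add: algebra_simps power2_eq_square)
    with dvd have "h dvd r^2 + r + (1 - d) div 4"
      by (simp only: dvd_add_left_iff[OF dvd_triv_left])
    moreover have "r \<in> {0..h - 1}" using h by (simp add: r_def)
    ultimately show False using check h \<open>h \<le> M\<close> small by auto
  qed
qed

lemma class_number_one_orders:
  assumes "d \<in> {-1, -2, -3, -7, -11, -19, -43, -67, -163}"
  obtains w t k where "dedekind_hasse_order w t k" "OK d = int_lattice w"
proof -
  have "d < 0" using assms by auto
  have "squarefree d"
    by (rule squarefree_int_if_no_small_square_divisor[where M = 12])
       (use assms in \<open>auto simp: Icc_int_eq_insert_lb\<close>)
  consider "d \<in> {-1, -2}" | "d \<in> {-3, -7, -11, -19, -43, -67, -163}" using assms by auto
  then show ?thesis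
  proof cases
    case 1
    then have "d mod 4 \<in> {2, 3}" "- 2 \<le> d" by auto
    then show ?thesis
      using that dedekind_hasse_order_sqrt_d OK_eq_int_lattice_sqrt_d \<open>d < 0\<close> \<open>squarefree d\<close> by blast
  next
    case 2
    then have "d mod 4 = 1" "(0::int) \<le> 7" "- d < 3 * (7 + 1)^2" by auto
    moreover have "\<forall>h\<in>{2..7}. 3 * h^2 \<le> - d \<longrightarrow> (\<forall>r\<in>{0..h - 1}. \<not> h dvd r^2 + r + (1 - d) div 4)"
      using 2 by (auto simp: Icc_int_eq_insert_lb)
    ultimately show ?thesis
      using that dedekind_hasse_order_half OK_eq_int_lattice_half \<open>d < 0\<close> \<open>squarefree d\<close> by blast
  qed
qed

theorem theorem7:
  fixes d :: int and A :: "complex set"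
  assumes "d \<in> {-1, -2, -3, -7, -11, -19, -43, -67, -163}"
    and "ideal_in (OK d) A" and "A \<noteq> {0}"
  shows "(\<exists>m\<in>OK d. m \<noteq> 0 \<and> PH (OK d) A = tau (OK d) m) \<and>
         (\<exists>n::int. n > 0 \<and>
            PH (OK d) (ideal_prod (OK d) A (cnj ` A)) = tau (OK d) (of_int n))"
proof -
  obtain w t k where "dedekind_hasse_order w t k" "OK d = int_lattice w"
    using class_number_one_orders[OF assms(1)] .
  then show ?thesis using dedekind_hasse_order.PH_eq_tau assms(2,3) by metis
qed

end
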